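(* Let $\lambda$ be a positive integer, $\mu\in\mathbb{R}$, and let $F$, $G$ be smooth functions of $\psi$ on an open interval, with $G$ nonconstant. Consider the function $$I_\lambda=\mathcal{U}^\lambda G(\psi)=\left(p_r+\frac{\mu}{r}\mathcal{X}_L\right)^\lambda G(\psi).$$ Then $I_\lambda$ is a constant of motion of $H=\frac12p_r^2+\frac{1}{r^2}\left(\frac12p_\psi^2+F(\psi)\right)$ (i.e. $\{I_\lambda,H\}=0$, equivalently $\mathcal{X}_H I_\lambda=0$) if and only if $\lambda\mu=1$ and there are constants $k,\psi_0\in\mathbb{R}$ and $A\neq0$ such that $$F(\psi)=\frac{k}{\sin^2(\lambda\psi+\psi_0)},\qquad G(\psi)=A\cos(\lambda\psi+\psi_0)$$ (on the interval, where $\sin(\lambda\psi+\psi_0)\neq0$).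
   Context: Phase space coordinates are $(r,\psi,p_r,p_\psi)$ with $r>0$ and canonical Poisson bracket; dots denote derivatives in $\psi$. $L=\frac12p_\psi^2+F(\psi)$, $\mathcal{X}_L=p_\psi\frac{\partial}{\partial\psi}-\dot F\frac{\partial}{\partial p_\psi}$ is its Hamiltonian vector field, and $\mathcal{X}_H=p_r\frac{\partial}{\partial r}+\frac{2L}{r^3}\frac{\partial}{\partial p_r}+\frac{1}{r^2}\mathcal{X}_L$ is the Hamiltonian vector field of $H$. $\mathcal{U}=p_r+\frac{\mu}{r}\mathcal{X}_L$ is a differential operator ($p_r$ and $\mu/r$ act by multiplication), and $\mathcal{U}^\lambda G$ means applying $\mathcal{U}$ $\lambda$ times to the function $G(\psi)$. *)

theory Defs
  imports "HOL-Analysis.Analysis"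
begin

text \<open>Phase-space functions are functions of (r, psi, p_r, p_psi), curried.\<close>
type_synonym pfun = "real \<Rightarrow> real \<Rightarrow> real \<Rightarrow> real \<Rightarrow> real"

definition smooth_on :: "real set \<Rightarrow> (real \<Rightarrow> real) \<Rightarrow> bool" where
  "smooth_on J f \<longleftrightarrow> (\<forall>n. \<forall>x\<in>J. (((deriv :: (real \<Rightarrow> real) \<Rightarrow> real \<Rightarrow> real) ^^ n) f) differentiable (at x))"

text \<open>Hamiltonian vector field of L = p_psi^2/2 + F(psi):
  X_L = p_psi d/dpsi - F' d/dp_psi.\<close>
definition XL :: "(real \<Rightarrow> real) \<Rightarrow> pfun \<Rightarrow> pfun" where
  "XL F f = (\<lambda>r \<psi> pr p\<psi>.
      p\<psi> * deriv (\<lambda>x. f r x pr p\<psi>) \<psi> - deriv F \<psi> * deriv (\<lambda>y. f r \<psi> pr y) p\<psi>)"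

definition Lfun :: "(real \<Rightarrow> real) \<Rightarrow> pfun" where
  "Lfun F = (\<lambda>r \<psi> pr p\<psi>. p\<psi>\<^sup>2 / 2 + F \<psi>)"

text \<open>Hamiltonian vector field of H = p_r^2/2 + L/r^2:
  X_H = p_r d/dr + (2L/r^3) d/dp_r + (1/r^2) X_L.\<close>
definition XH :: "(real \<Rightarrow> real) \<Rightarrow> pfun \<Rightarrow> pfun" where
  "XH F f = (\<lambda>r \<psi> pr p\<psi>.
      pr * deriv (\<lambda>s. f s \<psi> pr p\<psi>) r
      + 2 * Lfun F r \<psi> pr p\<psi> / r ^ 3 * deriv (\<lambda>q. f r \<psi> q p\<psi>) pr
      + XL F f r \<psi> pr p\<psi> / r\<^sup>2)"

definition Uop :: "real \<Rightarrow> (real \<Rightarrow> real) \<Rightarrow> pfun \<Rightarrow> pfun" where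
  "Uop \<mu> F f = (\<lambda>r \<psi> pr p\<psi>. pr * f r \<psi> pr p\<psi> + \<mu> / r * XL F f r \<psi> pr p\<psi>)"

definition Ilam :: "nat \<Rightarrow> real \<Rightarrow> (real \<Rightarrow> real) \<Rightarrow> (real \<Rightarrow> real) \<Rightarrow> pfun" where
  "Ilam n \<mu> F G = (Uop \<mu> F ^^ n) (\<lambda>r \<psi> pr p\<psi>. G \<psi>)"

definition const_of_motion :: "real set \<Rightarrow> (real \<Rightarrow> real) \<Rightarrow> pfun \<Rightarrow> bool" where
  "const_of_motion J F I \<longleftrightarrow>
     (\<forall>r>0. \<forall>\<psi>\<in>J. \<forall>pr p\<psi>. XH F I r \<psi> pr p\<psi> = 0)"

end

theory Submission
  imports Defs
begin

(* 1. Iterates X_L^j G are polynomials in p_psi with smooth coefficients in psi, so all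
      partial derivatives below exist.  Since p_r and mu/r commute with X_L, the binomial
      theorem gives  I_n = sum_j C(n,j) p_r^(n-j) (mu/r)^j X_L^j G.
   2. Applying X_H yields a polynomial in p_r with explicit coefficients (XH_coeff), so
      I_n is conserved iff all of them vanish.  The coefficient of p_r^n is (1 - n mu) X_L G,
      which forces n mu = 1 as G is nonconstant; the next one is then proportional to
      X_L^2 G + 2 n^2 L G, equivalently G'' = -n^2 G and F' G' = 2 n^2 F G (angular_odes).
      Conversely these equations give X_L^(j+2) G = -2 n^2 L X_L^j G (X_L annihilates L),
      and then all coefficients vanish by a binomial identity.
   3. The ODEs are solved explicitly: G = A cos (n psi + psi0), and (F sin^2)' = 0 shows
      F = k / sin^2; where the sine vanishes, continuity of F forces F = 0. *)

section \<open>Smooth functions of one variable\<close>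

lemma eventually_nhds_eq_on_open:
  "open J \<Longrightarrow> x \<in> J \<Longrightarrow> \<forall>y\<in>J. f y = g y \<Longrightarrow> eventually (\<lambda>y. f y = g y) (nhds x)"
  by (rule eventually_mono[OF eventually_nhds_in_open[of J x]]) auto

lemma differentiable_eventually_eq:
  fixes f g :: "real \<Rightarrow> real"
  assumes "eventually (\<lambda>y. f y = g y) (nhds x)" "f differentiable (at x)"
  shows "g differentiable (at x)"
  using DERIV_cong_ev[OF refl assms(1) refl] assms(2)
  by (metis real_differentiable_def)

(* k-fold differentiability on J; smooth_on J f means Ck_on k J f for all k.
   The finite levels are what makes an induction on k possible. *)
definition Ck_on :: "nat \<Rightarrow> real set \<Rightarrow> (real \<Rightarrow> real) \<Rightarrow> bool" where
  "Ck_on k J f \<longleftrightarrow> (\<forall>m\<le>k. \<forall>x\<in>J. ((deriv ^^ m) f) differentiable (at x))"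

lemma Ck_on_0: "Ck_on 0 J f \<longleftrightarrow> (\<forall>x\<in>J. f differentiable (at x))"
  by (simp add: Ck_on_def)

lemma Ck_on_Suc:
  "Ck_on (Suc k) J f \<longleftrightarrow> (\<forall>x\<in>J. f differentiable (at x)) \<and> Ck_on k J (deriv f)"
proof -
  have split_Suc: "(\<forall>m\<le>Suc k. P m) \<longleftrightarrow> P 0 \<and> (\<forall>m\<le>k. P (Suc m))" for P :: "nat \<Rightarrow> bool"
    by (metis Suc_le_mono le0 not0_implies_Suc)
  show ?thesis
    unfolding Ck_on_def split_Suc by (simp add: funpow_Suc_right del: funpow.simps)
qed

lemma Ck_on_Suc_imp: "Ck_on (Suc k) J f \<Longrightarrow> Ck_on k J f"
  by (simp add: Ck_on_def)

lemma smooth_on_iff_Ck_on: "smooth_on J f \<longleftrightarrow> (\<forall>k. Ck_on k J f)"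
  unfolding smooth_on_def Ck_on_def by blast

lemma Ck_on_cong:
  assumes "open J" "\<forall>x\<in>J. f x = g x" "Ck_on k J f"
  shows "Ck_on k J g"
  using assms(2,3)
proof (induction k arbitrary: f g)
  case 0
  then show ?case
    using differentiable_eventually_eq[OF eventually_nhds_eq_on_open[OF assms(1)]]
    by (auto simp: Ck_on_0)
next
  case (Suc k)
  have "\<forall>x\<in>J. deriv f x = deriv g x"
    using deriv_cong_ev[OF eventually_nhds_eq_on_open[OF assms(1) _ Suc.prems(1)] refl] by blast
  then show ?case
    using Suc differentiable_eventually_eq[OF eventually_nhds_eq_on_open[OF assms(1)]]
    by (auto simp: Ck_on_Suc)
qed

lemma Ck_on_add:
  assumes "open J" "Ck_on k J f" "Ck_on k J g"
  shows "Ck_on k J (\<lambda>x. f x + g x)"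
  using assms(2,3)
proof (induction k arbitrary: f g)
  case 0
  then show ?case by (auto simp: Ck_on_0)
next
  case (Suc k)
  have "\<forall>x\<in>J. deriv f x + deriv g x = deriv (\<lambda>x. f x + g x) x"
    using Suc.prems
    by (auto simp: Ck_on_Suc DERIV_deriv_iff_real_differentiable[symmetric]
             intro!: DERIV_imp_deriv[symmetric] DERIV_add)
  then have "Ck_on k J (deriv (\<lambda>x. f x + g x))"
    using Ck_on_cong[OF assms(1)] Suc by (auto simp: Ck_on_Suc)
  with Suc.prems show ?case by (auto simp: Ck_on_Suc)
qed

lemma Ck_on_mult:
  assumes "open J" "Ck_on k J f" "Ck_on k J g"
  shows "Ck_on k J (\<lambda>x. f x * g x)"
  using assms(2,3)
proof (induction k arbitrary: f g)
  case 0
  then show ?case by (auto simp: Ck_on_0)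
next
  case (Suc k)
  have product_rule: "\<forall>x\<in>J. deriv f x * g x + f x * deriv g x = deriv (\<lambda>x. f x * g x) x"
  proof
    fix x assume "x \<in> J"
    then have "DERIV f x :> deriv f x" "DERIV g x :> deriv g x"
      using Suc.prems by (auto simp: Ck_on_Suc DERIV_deriv_iff_real_differentiable)
    from DERIV_mult'[OF this] show "deriv f x * g x + f x * deriv g x = deriv (\<lambda>x. f x * g x) x"
      by (simp add: DERIV_imp_deriv)
  qed
  have "Ck_on k J (\<lambda>x. deriv f x * g x)"
    using Suc.IH[of "deriv f" g] Suc.prems(1) Ck_on_Suc_imp[OF Suc.prems(2)]
    by (simp add: Ck_on_Suc)
  moreover have "Ck_on k J (\<lambda>x. f x * deriv g x)"
    using Suc.IH[of f "deriv g"] Suc.prems(2) Ck_on_Suc_imp[OF Suc.prems(1)]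
    by (simp add: Ck_on_Suc)
  ultimately have "Ck_on k J (\<lambda>x. deriv f x * g x + f x * deriv g x)"
    by (rule Ck_on_add[OF assms(1)])
  then have "Ck_on k J (deriv (\<lambda>x. f x * g x))"
    by (rule Ck_on_cong[OF assms(1) product_rule])
  with Suc.prems show ?case by (auto simp: Ck_on_Suc)
qed

lemma smooth_on_DERIV: "smooth_on J f \<Longrightarrow> x \<in> J \<Longrightarrow> DERIV f x :> deriv f x"
  by (auto simp: smooth_on_iff_Ck_on Ck_on_0 DERIV_deriv_iff_real_differentiable dest: spec[of _ 0])

lemma smooth_on_deriv: "smooth_on J f \<Longrightarrow> smooth_on J (deriv f)"
  by (auto simp: smooth_on_iff_Ck_on Ck_on_Suc dest: spec[of _ "Suc k" for k])

lemma smooth_on_const: "smooth_on J (\<lambda>x. c)"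
proof -
  have "Ck_on k J (\<lambda>x. c)" for k c
    by (induction k arbitrary: c) (simp_all add: Ck_on_0 Ck_on_Suc)
  then show ?thesis by (simp add: smooth_on_iff_Ck_on)
qed

lemma smooth_on_mult:
  "open J \<Longrightarrow> smooth_on J f \<Longrightarrow> smooth_on J g \<Longrightarrow> smooth_on J (\<lambda>x. f x * g x)"
  by (simp add: smooth_on_iff_Ck_on Ck_on_mult)

section \<open>Polynomials in the angular momentum and the operator X_L\<close>

(* X_L acting on functions of (psi, p_psi); on phase-space functions XL acts in the
   same way on these two arguments, with r and p_r as parameters. *)
definition XLp :: "(real \<Rightarrow> real) \<Rightarrow> (real \<Rightarrow> real \<Rightarrow> real) \<Rightarrow> real \<Rightarrow> real \<Rightarrow> real" where
  "XLp F g = (\<lambda>\<psi> p. p * deriv (\<lambda>x. g x p) \<psi> - deriv F \<psi> * deriv (\<lambda>y. g \<psi> y) p)"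

(* A polynomial in p with coefficient functions of psi, given as a list of pairs
   (coefficient, exponent), and the effect of X_L on such a list. *)
definition poly_eval :: "((real \<Rightarrow> real) \<times> nat) list \<Rightarrow> real \<Rightarrow> real \<Rightarrow> real" where
  "poly_eval cs \<psi> p = (\<Sum>(a, e)\<leftarrow>cs. a \<psi> * p ^ e)"

lemma poly_eval_simps [simp]:
  "poly_eval [] \<psi> p = 0"
  "poly_eval ((a, e) # cs) \<psi> p = a \<psi> * p ^ e + poly_eval cs \<psi> p"
  "poly_eval (cs @ ds) \<psi> p = poly_eval cs \<psi> p + poly_eval ds \<psi> p"
  by (simp_all add: poly_eval_def)

definition XLp_coeffs :: "(real \<Rightarrow> real) \<Rightarrow> ((real \<Rightarrow> real) \<times> nat) list \<Rightarrow> ((real \<Rightarrow> real) \<times> nat) list" where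
  "XLp_coeffs F cs =
     concat (map (\<lambda>(a, e). [(deriv a, Suc e), (\<lambda>\<psi>. - real e * (deriv F \<psi> * a \<psi>), e - 1)]) cs)"

lemma XLp_coeffs_simps [simp]:
  "XLp_coeffs F [] = []"
  "XLp_coeffs F ((a, e) # cs) =
     [(deriv a, Suc e), (\<lambda>\<psi>. - real e * (deriv F \<psi> * a \<psi>), e - 1)] @ XLp_coeffs F cs"
  by (simp_all add: XLp_coeffs_def)

lemma poly_eval_DERIV_psi:
  assumes "\<forall>(a, e)\<in>set cs. smooth_on J a" "\<psi> \<in> J"
  shows "((\<lambda>x. poly_eval cs x p) has_real_derivative (\<Sum>(a, e)\<leftarrow>cs. deriv a \<psi> * p ^ e)) (at \<psi>)"
  using assms(1)
proof (induction cs)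
  case (Cons c cs)
  then show ?case
    using smooth_on_DERIV[OF _ assms(2)] by (cases c) (auto intro!: derivative_eq_intros)
qed simp

lemma poly_eval_DERIV_p:
  "((\<lambda>y. poly_eval cs \<psi> y) has_real_derivative (\<Sum>(a, e)\<leftarrow>cs. a \<psi> * (real e * p ^ (e - 1)))) (at p)"
proof (induction cs)
  case (Cons c cs)
  then show ?case by (cases c) (auto intro!: derivative_eq_intros)
qed simp

lemma poly_eval_XLp_coeffs:
  "poly_eval (XLp_coeffs F cs) \<psi> p =
     p * (\<Sum>(a, e)\<leftarrow>cs. deriv a \<psi> * p ^ e) - deriv F \<psi> * (\<Sum>(a, e)\<leftarrow>cs. a \<psi> * (real e * p ^ (e - 1)))"
proof (induction cs)
  case (Cons c cs)
  then show ?case by (cases c) (simp add: algebra_simps)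
qed simp

lemma XLp_coeffs_smooth:
  assumes "open J" "smooth_on J F" "\<forall>(a, e)\<in>set cs. smooth_on J a"
  shows "\<forall>(a, e)\<in>set (XLp_coeffs F cs). smooth_on J a"
  using assms(3)
proof (induction cs)
  case (Cons c cs)
  obtain a e where c: "c = (a, e)" by fastforce
  have "smooth_on J a" using Cons.prems c by auto
  then have "smooth_on J (\<lambda>\<psi>. - real e * (deriv F \<psi> * a \<psi>))"
    by (intro smooth_on_mult[OF assms(1)] smooth_on_const smooth_on_deriv assms(2))
  moreover have "\<forall>(b, d)\<in>set (XLp_coeffs F cs). smooth_on J b"
    using Cons.IH Cons.prems by simp
  ultimately show ?case
    using smooth_on_deriv[OF \<open>smooth_on J a\<close>] by (simp add: c)
qed simp

(* g is, on J, a polynomial in p_psi whose coefficients are smooth in psi.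
   This is the class on which X_L can be iterated with all derivatives existing. *)
definition smooth_poly_on :: "real set \<Rightarrow> (real \<Rightarrow> real \<Rightarrow> real) \<Rightarrow> bool" where
  "smooth_poly_on J g \<longleftrightarrow>
     (\<exists>cs. (\<forall>(a, e)\<in>set cs. smooth_on J a) \<and> (\<forall>x\<in>J. \<forall>y. g x y = poly_eval cs x y))"

lemma smooth_poly_on_const: "smooth_on J G \<Longrightarrow> smooth_poly_on J (\<lambda>\<psi> p. G \<psi>)"
  unfolding smooth_poly_on_def by (intro exI[of _ "[(G, 0)]"]) simp

lemma smooth_poly_on_DERIV_psi:
  assumes "open J" "smooth_poly_on J g" "\<psi> \<in> J"
  shows "((\<lambda>x. g x p) has_real_derivative deriv (\<lambda>x. g x p) \<psi>) (at \<psi>)"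
proof -
  obtain cs where cs: "\<forall>(a, e)\<in>set cs. smooth_on J a" "\<forall>x\<in>J. \<forall>y. g x y = poly_eval cs x y"
    using assms(2) unfolding smooth_poly_on_def by blast
  have "eventually (\<lambda>x. poly_eval cs x p = g x p) (nhds \<psi>)"
    using eventually_nhds_eq_on_open[OF assms(1,3), of "\<lambda>x. poly_eval cs x p" "\<lambda>x. g x p"] cs(2)
    by simp
  from DERIV_cong_ev[OF refl this refl, THEN iffD1, OF poly_eval_DERIV_psi[OF cs(1) assms(3)]]
  show ?thesis
    by (simp add: DERIV_imp_deriv)
qed

lemma smooth_poly_on_DERIV_p:
  assumes "smooth_poly_on J g" "\<psi> \<in> J"
  shows "((\<lambda>y. g \<psi> y) has_real_derivative deriv (\<lambda>y. g \<psi> y) p) (at p)"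
proof -
  obtain cs where "\<forall>x\<in>J. \<forall>y. g x y = poly_eval cs x y"
    using assms(1) unfolding smooth_poly_on_def by blast
  then have "(\<lambda>y. g \<psi> y) = (\<lambda>y. poly_eval cs \<psi> y)"
    using assms(2) by auto
  with poly_eval_DERIV_p[of cs \<psi> p] show ?thesis
    by (simp add: DERIV_imp_deriv)
qed

lemma smooth_poly_on_XLp:
  assumes "open J" "smooth_on J F" "smooth_poly_on J g"
  shows "smooth_poly_on J (XLp F g)"
proof -
  obtain cs where cs: "\<forall>(a, e)\<in>set cs. smooth_on J a" "\<forall>x\<in>J. \<forall>y. g x y = poly_eval cs x y"
    using assms(3) unfolding smooth_poly_on_def by blast
  have "XLp F g \<psi> p = poly_eval (XLp_coeffs F cs) \<psi> p" if "\<psi> \<in> J" for \<psi> p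
  proof -
    have "deriv (\<lambda>x. g x p) \<psi> = deriv (\<lambda>x. poly_eval cs x p) \<psi>"
      by (rule deriv_cong_ev[OF eventually_nhds_eq_on_open[OF assms(1) that] refl]) (use cs(2) in auto)
    also have "\<dots> = (\<Sum>(a, e)\<leftarrow>cs. deriv a \<psi> * p ^ e)"
      by (rule DERIV_imp_deriv[OF poly_eval_DERIV_psi[OF cs(1) that]])
    finally have d_psi: "deriv (\<lambda>x. g x p) \<psi> = (\<Sum>(a, e)\<leftarrow>cs. deriv a \<psi> * p ^ e)" .
    have "(\<lambda>y. g \<psi> y) = (\<lambda>y. poly_eval cs \<psi> y)"
      using cs(2) that by auto
    then have d_p: "deriv (\<lambda>y. g \<psi> y) p = (\<Sum>(a, e)\<leftarrow>cs. a \<psi> * (real e * p ^ (e - 1)))"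
      using DERIV_imp_deriv[OF poly_eval_DERIV_p] by simp
    show ?thesis
      unfolding XLp_def d_psi d_p poly_eval_XLp_coeffs ..
  qed
  then show ?thesis
    unfolding smooth_poly_on_def
    by (intro exI[of _ "XLp_coeffs F cs"] conjI XLp_coeffs_smooth[OF assms(1,2) cs(1)]) simp
qed

definition XLpow :: "(real \<Rightarrow> real) \<Rightarrow> (real \<Rightarrow> real) \<Rightarrow> nat \<Rightarrow> real \<Rightarrow> real \<Rightarrow> real" where
  "XLpow F G j = (XLp F ^^ j) (\<lambda>\<psi> p. G \<psi>)"

lemma XLpow_0: "XLpow F G 0 = (\<lambda>\<psi> p. G \<psi>)"
  by (simp add: XLpow_def)

lemma XLpow_Suc: "XLpow F G (Suc j) = XLp F (XLpow F G j)"
  by (simp add: XLpow_def)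

lemma smooth_poly_on_XLpow:
  "open J \<Longrightarrow> smooth_on J F \<Longrightarrow> smooth_on J G \<Longrightarrow> smooth_poly_on J (XLpow F G j)"
  by (induction j) (simp_all add: XLpow_0 XLpow_Suc smooth_poly_on_const smooth_poly_on_XLp)

section \<open>Binomial expansion of U^n G\<close>

lemma XL_linear_combination:
  assumes J: "open J" "smooth_on J F" "\<psi> \<in> J"
    and g: "\<forall>j\<le>n. smooth_poly_on J (g j)"
    and f: "\<forall>s x q y. x \<in> J \<longrightarrow> f s x q y = (\<Sum>j\<le>n. c s q j * g j x y)"
  shows "XL F f r \<psi> pr p = (\<Sum>j\<le>n. c r pr j * XLp F (g j) \<psi> p)"
proof -
  have "deriv (\<lambda>x. f r x pr p) \<psi> = deriv (\<lambda>x. \<Sum>j\<le>n. c r pr j * g j x p) \<psi>"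
    by (rule deriv_cong_ev[OF eventually_nhds_eq_on_open[OF J(1,3)] refl]) (use f in auto)
  also have "\<dots> = (\<Sum>j\<le>n. c r pr j * deriv (\<lambda>x. g j x p) \<psi>)"
    using g by (intro DERIV_imp_deriv DERIV_sum DERIV_cmult smooth_poly_on_DERIV_psi[OF J(1) _ J(3)]) auto
  finally have d_psi: "deriv (\<lambda>x. f r x pr p) \<psi> = (\<Sum>j\<le>n. c r pr j * deriv (\<lambda>x. g j x p) \<psi>)" .
  have "(\<lambda>y. f r \<psi> pr y) = (\<lambda>y. \<Sum>j\<le>n. c r pr j * g j \<psi> y)"
    using f J(3) by auto
  then have "deriv (\<lambda>y. f r \<psi> pr y) p = deriv (\<lambda>y. \<Sum>j\<le>n. c r pr j * g j \<psi> y) p"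
    by simp
  also have "\<dots> = (\<Sum>j\<le>n. c r pr j * deriv (\<lambda>y. g j \<psi> y) p)"
    using g by (intro DERIV_imp_deriv DERIV_sum DERIV_cmult smooth_poly_on_DERIV_p[OF _ J(3)]) auto
  finally have d_p: "deriv (\<lambda>y. f r \<psi> pr y) p = (\<Sum>j\<le>n. c r pr j * deriv (\<lambda>y. g j \<psi> y) p)" .
  show ?thesis
    unfolding XL_def d_psi d_p XLp_def by (simp add: sum_distrib_left sum_subtractf algebra_simps)
qed

(* Pascal's rule, in the form needed to expand (x + y X)^(n+1) from (x + y X)^n. *)
lemma binomial_sum_step:
  fixes x y :: real and g :: "nat \<Rightarrow> real"
  shows "x * (\<Sum>j\<le>n. real (n choose j) * x ^ (n - j) * y ^ j * g j)
       + y * (\<Sum>j\<le>n. real (n choose j) * x ^ (n - j) * y ^ j * g (Suc j))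
       = (\<Sum>j\<le>Suc n. real (Suc n choose j) * x ^ (Suc n - j) * y ^ j * g j)"
proof -
  have "x * (\<Sum>j\<le>n. real (n choose j) * x ^ (n - j) * y ^ j * g j)
      = (\<Sum>j\<le>Suc n. real (n choose j) * x ^ (Suc n - j) * y ^ j * g j)"
    unfolding sum_distrib_left by (simp add: Suc_diff_le mult_ac)
  moreover have "y * (\<Sum>j\<le>n. real (n choose j) * x ^ (n - j) * y ^ j * g (Suc j))
      = (\<Sum>j\<le>n. real (n choose j) * x ^ (n - j) * y ^ Suc j * g (Suc j))"
    unfolding sum_distrib_left by (simp add: mult_ac)
  moreover have "(\<Sum>j\<le>Suc n. real (Suc n choose j) * x ^ (Suc n - j) * y ^ j * g j)
      = (\<Sum>j\<le>Suc n. real (n choose j) * x ^ (Suc n - j) * y ^ j * g j)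
        + (\<Sum>j\<le>n. real (n choose j) * x ^ (n - j) * y ^ Suc j * g (Suc j))"
    by (subst (1 2) sum.atMost_Suc_shift) (simp add: sum.distrib algebra_simps)
  ultimately show ?thesis by simp
qed

(* As p_r and mu/r commute with X_L, U^n G expands binomially:
   I_n = sum_j C(n,j) p_r^(n-j) (mu/r)^j X_L^j G. *)
lemma Ilam_expansion:
  assumes J: "open J" "smooth_on J F" "smooth_on J G"
  shows "\<psi> \<in> J \<Longrightarrow> Ilam n \<mu> F G r \<psi> pr p
     = (\<Sum>j\<le>n. real (n choose j) * pr ^ (n - j) * (\<mu> / r) ^ j * XLpow F G j \<psi> p)"
proof (induction n arbitrary: r \<psi> pr p)
  case 0
  then show ?case by (simp add: Ilam_def XLpow_0)
next
  case (Suc n)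
  have "XL F (Ilam n \<mu> F G) r \<psi> pr p
      = (\<Sum>j\<le>n. real (n choose j) * pr ^ (n - j) * (\<mu> / r) ^ j * XLp F (XLpow F G j) \<psi> p)"
    using Suc smooth_poly_on_XLpow[OF J]
    by (intro XL_linear_combination[OF J(1,2) Suc.prems]) auto
  then have "Ilam (Suc n) \<mu> F G r \<psi> pr p
      = pr * (\<Sum>j\<le>n. real (n choose j) * pr ^ (n - j) * (\<mu> / r) ^ j * XLpow F G j \<psi> p)
        + \<mu> / r * (\<Sum>j\<le>n. real (n choose j) * pr ^ (n - j) * (\<mu> / r) ^ j * XLpow F G (Suc j) \<psi> p)"
    using Suc by (simp add: Ilam_def Uop_def XLpow_Suc)
  with binomial_sum_step[of pr n "\<mu> / r" "\<lambda>j. XLpow F G j \<psi> p"] show ?case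
    by simp
qed

section \<open>X_H applied to I_n as a polynomial in p_r\<close>

lemma XH_Ilam_terms:
  fixes pr p :: real
  assumes J: "open J" "smooth_on J F" "smooth_on J G" "\<psi> \<in> J" and r: "r > 0"
  defines "g \<equiv> \<lambda>j. XLpow F G j \<psi> p"
  shows "XH F (Ilam n \<mu> F G) r \<psi> pr p =
      pr * (\<Sum>j\<le>n. real (n choose j) * pr ^ (n - j) * (real j * (\<mu> / r) ^ (j - 1) * (- \<mu> / r\<^sup>2)) * g j)
    + 2 * (p\<^sup>2 / 2 + F \<psi>) / r ^ 3
        * (\<Sum>j\<le>n. real (n choose j) * (real (n - j) * pr ^ (n - j - 1)) * (\<mu> / r) ^ j * g j)
    + (\<Sum>j\<le>n. real (n choose j) * pr ^ (n - j) * (\<mu> / r) ^ j * XLpow F G (Suc j) \<psi> p) / r\<^sup>2"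
proof -
  note expansion = Ilam_expansion[OF J(1-3) J(4)]
  have d_mu_r: "((\<lambda>s. (\<mu> / s) ^ j) has_real_derivative real j * (\<mu> / r) ^ (j - 1) * (- \<mu> / r\<^sup>2)) (at r)" for j
  proof -
    have "((\<lambda>s. \<mu> / s) has_real_derivative - \<mu> / r\<^sup>2) (at r)"
      using r by (auto intro!: derivative_eq_intros simp: power2_eq_square field_simps)
    from DERIV_power[OF this, of j] show ?thesis by (simp add: mult_ac)
  qed
  have d_pow: "((\<lambda>q. q ^ k) has_real_derivative real k * q ^ (k - 1)) (at q)" for k and q :: real
    using DERIV_pow[of k q] by simp
  have "((\<lambda>s. \<Sum>j\<le>n. real (n choose j) * pr ^ (n - j) * (\<mu> / s) ^ j * g j) has_real_derivative
      (\<Sum>j\<le>n. real (n choose j) * pr ^ (n - j) * (real j * (\<mu> / r) ^ (j - 1) * (- \<mu> / r\<^sup>2)) * g j)) (at r)"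
    by (intro DERIV_sum DERIV_cmult_right DERIV_cmult d_mu_r)
  then have d_r: "deriv (\<lambda>s. Ilam n \<mu> F G s \<psi> pr p) r =
      (\<Sum>j\<le>n. real (n choose j) * pr ^ (n - j) * (real j * (\<mu> / r) ^ (j - 1) * (- \<mu> / r\<^sup>2)) * g j)"
    by (simp add: expansion g_def DERIV_imp_deriv)
  have "((\<lambda>q. \<Sum>j\<le>n. real (n choose j) * q ^ (n - j) * (\<mu> / r) ^ j * g j) has_real_derivative
      (\<Sum>j\<le>n. real (n choose j) * (real (n - j) * pr ^ (n - j - 1)) * (\<mu> / r) ^ j * g j)) (at pr)"
    by (intro DERIV_sum DERIV_cmult_right DERIV_cmult d_pow)
  then have d_pr: "deriv (\<lambda>q. Ilam n \<mu> F G r \<psi> q p) pr =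
      (\<Sum>j\<le>n. real (n choose j) * (real (n - j) * pr ^ (n - j - 1)) * (\<mu> / r) ^ j * g j)"
    by (simp add: expansion g_def DERIV_imp_deriv)
  have "XL F (Ilam n \<mu> F G) r \<psi> pr p
      = (\<Sum>j\<le>n. real (n choose j) * pr ^ (n - j) * (\<mu> / r) ^ j * XLp F (XLpow F G j) \<psi> p)"
    using Ilam_expansion[OF J(1-3)] smooth_poly_on_XLpow[OF J(1-3)]
    by (intro XL_linear_combination[OF J(1,2,4)]) auto
  then have XL_term: "XL F (Ilam n \<mu> F G) r \<psi> pr p
      = (\<Sum>j\<le>n. real (n choose j) * pr ^ (n - j) * (\<mu> / r) ^ j * XLpow F G (Suc j) \<psi> p)"
    by (simp add: XLpow_Suc)
  show ?thesis
    unfolding XH_def d_r d_pr XL_term Lfun_def by simp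
qed

(* Coefficient of p_r^(n+1-m) / r^(m+1) in X_H I_n; Lv stands for the value of L
   and g j for the value of X_L^j G. *)
definition XH_coeff :: "nat \<Rightarrow> real \<Rightarrow> real \<Rightarrow> (nat \<Rightarrow> real) \<Rightarrow> nat \<Rightarrow> real" where
  "XH_coeff n \<mu> Lv g m =
      - (real m * real (n choose m) * \<mu> ^ m) * g m
    + (if 1 \<le> m then real (n choose (m - 1)) * \<mu> ^ (m - 1) * g m else 0)
    + (if 2 \<le> m then 2 * Lv * real (n + 2 - m) * real (n choose (m - 2)) * \<mu> ^ (m - 2) * g (m - 2) else 0)"

lemma radial_term_coeffs:
  fixes r x :: real
  assumes r: "r > 0"
  shows "x * (\<Sum>j\<le>n. real (n choose j) * x ^ (n - j) * (real j * (\<mu> / r) ^ (j - 1) * (- \<mu> / r\<^sup>2)) * g j)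
     = (\<Sum>m\<le>Suc n. x ^ (Suc n - m) * ((- (real m * real (n choose m) * \<mu> ^ m) * g m) / r ^ (m + 1)))"
proof -
  have "x * (real (n choose j) * x ^ (n - j) * (real j * (\<mu> / r) ^ (j - 1) * (- \<mu> / r\<^sup>2)) * g j)
      = x ^ (Suc n - j) * ((- (real j * real (n choose j) * \<mu> ^ j) * g j) / r ^ (j + 1))"
    if "j \<le> n" for j
  proof (cases j)
    case (Suc i)
    have x_pow: "x ^ (Suc n - j) = x * x ^ (n - j)"
      using that by (simp add: Suc_diff_le)
    have r_pow: "real j * (\<mu> / r) ^ (j - 1) * (- \<mu> / r\<^sup>2) = - (real j * \<mu> ^ j / r ^ (j + 1))"
      using Suc r by (simp add: power_divide field_simps power2_eq_square)
    show ?thesis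
      unfolding x_pow r_pow using r by (simp add: field_simps)
  qed simp
  then show ?thesis
    unfolding sum_distrib_left by simp
qed

lemma momentum_term_coeffs:
  fixes r x :: real
  assumes r: "r > 0"
  shows "2 * Lv / r ^ 3 * (\<Sum>j\<le>n. real (n choose j) * (real (n - j) * x ^ (n - j - 1)) * (\<mu> / r) ^ j * g j)
     = (\<Sum>m\<le>Suc n. x ^ (Suc n - m) * ((if 2 \<le> m then 2 * Lv * real (n + 2 - m) * real (n choose (m - 2))
                                         * \<mu> ^ (m - 2) * g (m - 2) else 0) / r ^ (m + 1)))"
proof -
  have "(\<Sum>m\<le>Suc n. x ^ (Suc n - m) * ((if 2 \<le> m then 2 * Lv * real (n + 2 - m) * real (n choose (m - 2))
                                         * \<mu> ^ (m - 2) * g (m - 2) else 0) / r ^ (m + 1)))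
     = (\<Sum>j<n. x ^ (n - Suc j) * ((2 * Lv * real (n - j) * real (n choose j) * \<mu> ^ j * g j) / r ^ (j + 3)))"
    by (subst sum.atMost_Suc_shift, subst sum.atMost_shift) (simp add: numeral_3_eq_3)
  also have "\<dots> = (\<Sum>j\<le>n. x ^ (n - Suc j) * ((2 * Lv * real (n - j) * real (n choose j) * \<mu> ^ j * g j) / r ^ (j + 3)))"
    by (simp add: lessThan_Suc_atMost[symmetric])
  also have "\<dots> = 2 * Lv / r ^ 3 * (\<Sum>j\<le>n. real (n choose j) * (real (n - j) * x ^ (n - j - 1)) * (\<mu> / r) ^ j * g j)"
    unfolding sum_distrib_left using r
    by (intro sum.cong refl) (simp add: power_divide field_simps power_add)
  finally show ?thesis by simp
qed

lemma angular_term_coeffs: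
  fixes r x :: real
  assumes r: "r > 0"
  shows "(\<Sum>j\<le>n. real (n choose j) * x ^ (n - j) * (\<mu> / r) ^ j * g (Suc j)) / r\<^sup>2
     = (\<Sum>m\<le>Suc n. x ^ (Suc n - m) * ((if 1 \<le> m then real (n choose (m - 1)) * \<mu> ^ (m - 1) * g m else 0)
                                        / r ^ (m + 1)))"
proof -
  have "(\<Sum>m\<le>Suc n. x ^ (Suc n - m) * ((if 1 \<le> m then real (n choose (m - 1)) * \<mu> ^ (m - 1) * g m else 0)
                                        / r ^ (m + 1)))
     = (\<Sum>j\<le>n. x ^ (n - j) * ((real (n choose j) * \<mu> ^ j * g (Suc j)) / r ^ (j + 2)))"
    by (subst sum.atMost_Suc_shift) simp
  also have "\<dots> = (\<Sum>j\<le>n. real (n choose j) * x ^ (n - j) * (\<mu> / r) ^ j * g (Suc j)) / r\<^sup>2"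
    unfolding sum_divide_distrib using r
    by (intro sum.cong refl) (simp add: power_divide field_simps power2_eq_square)
  finally show ?thesis by simp
qed

lemma XH_Ilam_poly:
  assumes J: "open J" "smooth_on J F" "smooth_on J G" "\<psi> \<in> J" and r: "r > 0"
  shows "XH F (Ilam n \<mu> F G) r \<psi> pr p =
    (\<Sum>m\<le>Suc n. pr ^ (Suc n - m) * (XH_coeff n \<mu> (p\<^sup>2 / 2 + F \<psi>) (\<lambda>j. XLpow F G j \<psi> p) m / r ^ (m + 1)))"
proof -
  let ?g = "\<lambda>j. XLpow F G j \<psi> p"
  let ?Lv = "p\<^sup>2 / 2 + F \<psi>"
  have "XH F (Ilam n \<mu> F G) r \<psi> pr p =
      (\<Sum>m\<le>Suc n. pr ^ (Suc n - m) * ((- (real m * real (n choose m) * \<mu> ^ m) * ?g m) / r ^ (m + 1)))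
    + (\<Sum>m\<le>Suc n. pr ^ (Suc n - m) * ((if 2 \<le> m then 2 * ?Lv * real (n + 2 - m) * real (n choose (m - 2))
                                         * \<mu> ^ (m - 2) * ?g (m - 2) else 0) / r ^ (m + 1)))
    + (\<Sum>m\<le>Suc n. pr ^ (Suc n - m) * ((if 1 \<le> m then real (n choose (m - 1)) * \<mu> ^ (m - 1) * ?g m else 0)
                                        / r ^ (m + 1)))"
    unfolding XH_Ilam_terms[OF J r] radial_term_coeffs[OF r, of pr n \<mu> ?g, symmetric]
      momentum_term_coeffs[OF r, of ?Lv n pr \<mu> ?g, symmetric]
      angular_term_coeffs[OF r, of n pr \<mu> ?g, symmetric]
    by simp
  also have "\<dots> = (\<Sum>m\<le>Suc n. pr ^ (Suc n - m) * (XH_coeff n \<mu> ?Lv ?g m / r ^ (m + 1)))"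
    unfolding XH_coeff_def sum.distrib[symmetric]
    by (intro sum.cong refl) (simp add: add_divide_distrib diff_divide_distrib distrib_left right_diff_distrib)
  finally show ?thesis .
qed

lemma XH_Ilam_zero_iff:
  assumes J: "open J" "smooth_on J F" "smooth_on J G" "\<psi> \<in> J" and r: "r > 0"
  shows "(\<forall>pr. XH F (Ilam n \<mu> F G) r \<psi> pr p = 0) \<longleftrightarrow>
         (\<forall>m\<le>Suc n. XH_coeff n \<mu> (p\<^sup>2 / 2 + F \<psi>) (\<lambda>j. XLpow F G j \<psi> p) m = 0)"
proof -
  let ?a = "\<lambda>m. XH_coeff n \<mu> (p\<^sup>2 / 2 + F \<psi>) (\<lambda>j. XLpow F G j \<psi> p) m / r ^ (m + 1)"
  have reverse: "(\<Sum>m\<le>Suc n. x ^ (Suc n - m) * ?a m) = (\<Sum>i\<le>Suc n. ?a (Suc n - i) * x ^ i)" for x :: real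
    by (rule sum.reindex_bij_witness[where i="\<lambda>i. Suc n - i" and j="\<lambda>m. Suc n - m"]) auto
  have "(\<forall>pr. XH F (Ilam n \<mu> F G) r \<psi> pr p = 0) \<longleftrightarrow> (\<forall>i\<le>Suc n. ?a (Suc n - i) = 0)"
    unfolding XH_Ilam_poly[OF J r] reverse by (rule polyfun_eq_0)
  also have "\<dots> \<longleftrightarrow> (\<forall>m\<le>Suc n. ?a m = 0)"
    by (metis diff_diff_cancel diff_le_self)
  finally show ?thesis
    using r by simp
qed

section \<open>The low-order coefficients and the recursion for X_L^j G\<close>

lemma XLpow_1: "XLpow F G 1 \<psi> p = p * deriv G \<psi>"
  by (simp add: XLpow_Suc XLpow_0 XLp_def)

lemma XLpow_2:
  assumes "smooth_on J G" "\<psi> \<in> J"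
  shows "XLpow F G 2 \<psi> p = p\<^sup>2 * deriv (deriv G) \<psi> - deriv F \<psi> * deriv G \<psi>"
proof -
  have "DERIV (deriv G) \<psi> :> deriv (deriv G) \<psi>"
    using smooth_on_DERIV[OF smooth_on_deriv[OF assms(1)] assms(2)] .
  then have "deriv (\<lambda>x. p * deriv G x) \<psi> = p * deriv (deriv G) \<psi>"
    by (intro DERIV_imp_deriv) (auto intro!: derivative_eq_intros)
  moreover have "deriv (\<lambda>y. y * deriv G \<psi>) p = deriv G \<psi>"
    by (intro DERIV_imp_deriv) (auto intro!: derivative_eq_intros)
  ultimately show ?thesis
    by (simp add: numeral_2_eq_2 XLpow_Suc XLpow_0 XLp_def power2_eq_square)
qed

(* The coefficients of p_r^n and p_r^(n-1). *)
lemma XH_coeff_1: "XH_coeff n \<mu> Lv g 1 = (1 - real n * \<mu>) * g 1"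
  by (simp add: XH_coeff_def algebra_simps)

lemma XH_coeff_2:
  "XH_coeff n \<mu> Lv g 2 = (real n * \<mu> - 2 * real (n choose 2) * \<mu>\<^sup>2) * g 2 + 2 * real n * Lv * g 0"
  by (simp add: XH_coeff_def algebra_simps power2_eq_square)

lemma binomial_absorption_real:
  assumes "k \<le> n"
  shows "real (Suc k) * real (n choose Suc k) = (real n - real k) * real (n choose k)"
proof -
  have "Suc k * (n choose Suc k) = (n - k) * (n choose k)"
    by (simp only: binomial_absorption binomial_absorb_comp)
  then have "real (Suc k * (n choose Suc k)) = real ((n - k) * (n choose k))"
    by (simp only:)
  with assms show ?thesis
    by (simp only: of_nat_mult of_nat_diff)
qed

(* If n mu = 1 and X_L^(i+2) G = -2 n^2 L X_L^i G, then every coefficient vanishes: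
   the three contributions to it cancel by the absorption identity. *)
lemma XH_coeff_vanish:
  assumes nmu: "real n * \<mu> = 1"
    and rec: "\<And>i. g (Suc (Suc i)) = - 2 * (real n)\<^sup>2 * Lv * g i"
    and m: "m \<le> Suc n"
  shows "XH_coeff n \<mu> Lv g m = 0"
proof (cases m)
  case (Suc m')
  show ?thesis
  proof (cases m')
    case 0
    then show ?thesis using Suc XH_coeff_1[of n \<mu> Lv g] nmu by simp
  next
    case (Suc i)
    have m_eq: "m = Suc (Suc i)" using Suc \<open>m = Suc m'\<close> by simp
    then have i: "Suc i \<le> n" using m by simp
    let ?B = "real (n choose Suc i)" and ?g = "g (Suc (Suc i))"
    have top: "real (Suc (Suc i)) * real (n choose Suc (Suc i)) = (real n - real (Suc i)) * ?B"
      by (rule binomial_absorption_real[OF i])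
    have bottom: "real (n + 2 - Suc (Suc i)) * real (n choose i) = real (Suc i) * ?B"
      using binomial_absorption_real[of i n] i by (simp add: of_nat_diff)
    have "\<mu>\<^sup>2 * ?g = - 2 * (real n * \<mu>)\<^sup>2 * Lv * g i"
      by (simp add: rec power2_eq_square algebra_simps)
    then have gi: "2 * Lv * g i = - (\<mu>\<^sup>2 * ?g)"
      using nmu by simp
    have "XH_coeff n \<mu> Lv g m = - (real (Suc (Suc i)) * real (n choose Suc (Suc i)) * \<mu> ^ Suc (Suc i)) * ?g
        + ?B * \<mu> ^ Suc i * ?g + (real (n + 2 - Suc (Suc i)) * real (n choose i)) * \<mu> ^ i * (2 * Lv * g i)"
      unfolding m_eq XH_coeff_def by (simp add: algebra_simps)
    also have "\<dots> = ?B * \<mu> ^ Suc i * ?g * (1 - real n * \<mu>)"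
      unfolding top bottom gi by (simp add: algebra_simps power2_eq_square)
    finally show ?thesis
      using nmu by simp
  qed
qed (simp add: XH_coeff_def)

(* X_L is a derivation with X_L L = 0, so a relation X_L^2 G = c L G propagates to
   X_L^(j+2) G = c L X_L^j G for all j. *)
lemma XLpow_recursion:
  assumes J: "open J" "smooth_on J F" "smooth_on J G"
    and base: "\<forall>x\<in>J. \<forall>y. XLpow F G 2 x y = c * ((y\<^sup>2 / 2 + F x) * G x)"
  shows "\<forall>x\<in>J. \<forall>y. XLpow F G (Suc (Suc j)) x y = c * ((y\<^sup>2 / 2 + F x) * XLpow F G j x y)"
proof (induction j)
  case 0
  then show ?case using base by (simp add: XLpow_0 numeral_2_eq_2)
next
  case (Suc j)
  show ?case
  proof (intro ballI allI)
    fix x y assume x: "x \<in> J"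
    note g_poly = smooth_poly_on_XLpow[OF J, of j]
    have dF: "DERIV F x :> deriv F x"
      by (rule smooth_on_DERIV[OF J(2) x])
    have dg_psi: "DERIV (\<lambda>x'. XLpow F G j x' y) x :> deriv (\<lambda>x'. XLpow F G j x' y) x"
      by (rule smooth_poly_on_DERIV_psi[OF J(1) g_poly x])
    have dg_p: "DERIV (\<lambda>y'. XLpow F G j x y') y :> deriv (\<lambda>y'. XLpow F G j x y') y"
      by (rule smooth_poly_on_DERIV_p[OF g_poly x])
    have "deriv (\<lambda>x'. XLpow F G (Suc (Suc j)) x' y) x
        = deriv (\<lambda>x'. c * ((y\<^sup>2 / 2 + F x') * XLpow F G j x' y)) x"
      by (rule deriv_cong_ev[OF eventually_nhds_eq_on_open[OF J(1) x] refl]) (use Suc.IH in auto)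
    also have "\<dots> = c * (deriv F x * XLpow F G j x y + (y\<^sup>2 / 2 + F x) * deriv (\<lambda>x'. XLpow F G j x' y) x)"
      using dF dg_psi by (intro DERIV_imp_deriv) (auto intro!: derivative_eq_intros)
    finally have d_psi: "deriv (\<lambda>x'. XLpow F G (Suc (Suc j)) x' y) x
        = c * (deriv F x * XLpow F G j x y + (y\<^sup>2 / 2 + F x) * deriv (\<lambda>x'. XLpow F G j x' y) x)" .
    have "(\<lambda>y'. XLpow F G (Suc (Suc j)) x y') = (\<lambda>y'. c * ((y'\<^sup>2 / 2 + F x) * XLpow F G j x y'))"
      using Suc.IH x by auto
    moreover have "deriv (\<lambda>y'. c * ((y'\<^sup>2 / 2 + F x) * XLpow F G j x y')) y
        = c * (y * XLpow F G j x y + (y\<^sup>2 / 2 + F x) * deriv (\<lambda>y'. XLpow F G j x y') y)"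
      using dg_p by (intro DERIV_imp_deriv) (auto intro!: derivative_eq_intros)
    ultimately have d_p: "deriv (\<lambda>y'. XLpow F G (Suc (Suc j)) x y') y
        = c * (y * XLpow F G j x y + (y\<^sup>2 / 2 + F x) * deriv (\<lambda>y'. XLpow F G j x y') y)"
      by simp
    show "XLpow F G (Suc (Suc (Suc j))) x y = c * ((y\<^sup>2 / 2 + F x) * XLpow F G (Suc j) x y)"
      unfolding XLpow_Suc[of F G "Suc (Suc j)"] XLpow_Suc[of F G j] XLp_def d_psi d_p
      by (simp add: algebra_simps)
  qed
qed

section \<open>Reduction to a system of two ordinary differential equations\<close>

lemma XH_coeff_2_normalised:
  assumes nmu: "real n * \<mu> = 1"
  shows "XH_coeff n \<mu> Lv g 2 = (g 2 + 2 * (real n)\<^sup>2 * Lv * g 0) / real n"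
proof -
  have n0: "real n \<noteq> 0" using nmu by (metis mult_zero_left zero_neq_one)
  then have n1: "1 \<le> n" by simp
  have "real (Suc 1) * real (n choose Suc 1) = (real n - 1) * real n"
    using binomial_absorption_real[of 1 n] n1 by simp
  then have choose_2: "2 * real (n choose 2) = real n * (real n - 1)"
    by (simp add: numeral_2_eq_2 mult.commute)
  have mu: "\<mu> = 1 / real n" using nmu n0 by (simp add: field_simps)
  show ?thesis
    unfolding XH_coeff_2 choose_2 mu using n0 by (simp add: field_simps power2_eq_square)
qed

lemma nonconstant_imp_deriv_nonzero:
  fixes G :: "real \<Rightarrow> real"
  assumes "convex J" "\<forall>x\<in>J. DERIV G x :> deriv G x" "\<exists>x\<in>J. \<exists>y\<in>J. G x \<noteq> G y"
  shows "\<exists>\<psi>\<in>J. deriv G \<psi> \<noteq> 0"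
proof (rule ccontr)
  assume "\<not> (\<exists>\<psi>\<in>J. deriv G \<psi> \<noteq> 0)"
  then have "(G has_field_derivative 0) (at x within J)" if "x \<in> J" for x
    using assms(2) that by (metis has_field_derivative_at_within)
  then obtain c where "\<forall>x\<in>J. G x = c"
    using has_field_derivative_zero_constant[OF assms(1)] by blast
  with assms(3) show False by auto
qed

definition angular_odes :: "real \<Rightarrow> real set \<Rightarrow> (real \<Rightarrow> real) \<Rightarrow> (real \<Rightarrow> real) \<Rightarrow> bool" where
  "angular_odes w J F G \<longleftrightarrow>
     (\<forall>\<psi>\<in>J. deriv (deriv G) \<psi> = - w\<^sup>2 * G \<psi> \<and> deriv F \<psi> * deriv G \<psi> = 2 * w\<^sup>2 * F \<psi> * G \<psi>)"

(* They say exactly that X_L^2 G + 2 n^2 L G = 0 identically in p_psi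
   (compare the coefficients of p_psi^2 and p_psi^0). *)
lemma angular_odes_iff_XLpow_2:
  assumes "smooth_on J G"
  shows "angular_odes (real n) J F G \<longleftrightarrow>
     (\<forall>\<psi>\<in>J. \<forall>p. XLpow F G 2 \<psi> p + 2 * (real n)\<^sup>2 * (p\<^sup>2 / 2 + F \<psi>) * G \<psi> = 0)"
  unfolding angular_odes_def
proof (rule ball_cong[OF refl])
  fix \<psi> assume "\<psi> \<in> J"
  let ?a = "deriv (deriv G) \<psi>" and ?c = "(real n)\<^sup>2 * G \<psi>"
    and ?b = "deriv F \<psi> * deriv G \<psi> - 2 * (real n)\<^sup>2 * F \<psi> * G \<psi>"
  have quadratic: "(\<forall>p::real. p\<^sup>2 * (a + c) - b = 0) \<longleftrightarrow> a = - c \<and> b = 0" for a b c :: real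
  proof
    assume "\<forall>p::real. p\<^sup>2 * (a + c) - b = 0"
    from this[rule_format, of 0] this[rule_format, of 1] show "a = - c \<and> b = 0" by simp
  qed simp
  have "\<forall>p. XLpow F G 2 \<psi> p + 2 * (real n)\<^sup>2 * (p\<^sup>2 / 2 + F \<psi>) * G \<psi> = p\<^sup>2 * (?a + ?c) - ?b"
    using XLpow_2[OF assms \<open>\<psi> \<in> J\<close>] by (simp add: algebra_simps)
  then have "(\<forall>p. XLpow F G 2 \<psi> p + 2 * (real n)\<^sup>2 * (p\<^sup>2 / 2 + F \<psi>) * G \<psi> = 0) \<longleftrightarrow> ?a = - ?c \<and> ?b = 0"
    by (simp only: quadratic)
  then show "(?a = - (real n)\<^sup>2 * G \<psi> \<and> deriv F \<psi> * deriv G \<psi> = 2 * (real n)\<^sup>2 * F \<psi> * G \<psi>) \<longleftrightarrow>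
      (\<forall>p. XLpow F G 2 \<psi> p + 2 * (real n)\<^sup>2 * (p\<^sup>2 / 2 + F \<psi>) * G \<psi> = 0)"
    by simp
qed

(* Main reduction: I_n is conserved iff n mu = 1 and the ODEs hold.
   Forward, the coefficients of p_r^n and p_r^(n-1) are used; backward, all coefficients vanish. *)
lemma const_of_motion_iff_angular_odes:
  assumes n: "n \<ge> 1" and J: "open J" "convex J" "smooth_on J F" "smooth_on J G"
    and nonconst: "\<exists>x\<in>J. \<exists>y\<in>J. G x \<noteq> G y"
  shows "const_of_motion J F (Ilam n \<mu> F G) \<longleftrightarrow> real n * \<mu> = 1 \<and> angular_odes (real n) J F G"
proof
  assume com: "const_of_motion J F (Ilam n \<mu> F G)"
  have coeffs: "XH_coeff n \<mu> (p\<^sup>2 / 2 + F \<psi>) (\<lambda>j. XLpow F G j \<psi> p) m = 0"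
    if "\<psi> \<in> J" "m \<le> Suc n" for \<psi> p m
    using com that XH_Ilam_zero_iff[OF J(1,3,4) that(1), of 1 n \<mu> p]
    unfolding const_of_motion_def by simp
  obtain \<psi>\<^sub>1 where "\<psi>\<^sub>1 \<in> J" "deriv G \<psi>\<^sub>1 \<noteq> 0"
    using nonconstant_imp_deriv_nonzero[OF J(2) _ nonconst] smooth_on_DERIV[OF J(4)] by blast
  then have nmu: "real n * \<mu> = 1"
    using coeffs[of \<psi>\<^sub>1 1 1] unfolding XH_coeff_1 XLpow_1 by simp
  have "angular_odes (real n) J F G"
    unfolding angular_odes_iff_XLpow_2[OF J(4)]
  proof (intro ballI allI)
    fix \<psi> p assume "\<psi> \<in> J"
    from coeffs[OF this, of 2 p] n nmu
    show "XLpow F G 2 \<psi> p + 2 * (real n)\<^sup>2 * (p\<^sup>2 / 2 + F \<psi>) * G \<psi> = 0"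
      by (simp add: XH_coeff_2_normalised XLpow_0)
  qed
  with nmu show "real n * \<mu> = 1 \<and> angular_odes (real n) J F G" ..
next
  assume "real n * \<mu> = 1 \<and> angular_odes (real n) J F G"
  then have nmu: "real n * \<mu> = 1" and odes: "angular_odes (real n) J F G" by auto
  have "XLpow F G 2 x y = - 2 * (real n)\<^sup>2 * ((y\<^sup>2 / 2 + F x) * G x)" if "x \<in> J" for x y
  proof -
    have "XLpow F G 2 x y + 2 * (real n)\<^sup>2 * (y\<^sup>2 / 2 + F x) * G x = 0"
      using odes that unfolding angular_odes_iff_XLpow_2[OF J(4)] by blast
    then have "XLpow F G 2 x y = - (2 * (real n)\<^sup>2 * (y\<^sup>2 / 2 + F x) * G x)"
      by (simp only: add_eq_0_iff2)
    then show ?thesis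
      by (simp add: algebra_simps)
  qed
  then have "\<forall>x\<in>J. \<forall>y. XLpow F G 2 x y = - 2 * (real n)\<^sup>2 * ((y\<^sup>2 / 2 + F x) * G x)"
    by blast
  from XLpow_recursion[OF J(1,3,4) this]
  have rec: "XLpow F G (Suc (Suc j)) \<psi> p = - 2 * (real n)\<^sup>2 * (p\<^sup>2 / 2 + F \<psi>) * XLpow F G j \<psi> p"
    if "\<psi> \<in> J" for \<psi> p j
    using that by (simp add: algebra_simps)
  show "const_of_motion J F (Ilam n \<mu> F G)"
    unfolding const_of_motion_def
  proof (intro allI impI ballI)
    fix r \<psi> pr p :: real assume "r > 0" "\<psi> \<in> J"
    have "\<forall>m\<le>Suc n. XH_coeff n \<mu> (p\<^sup>2 / 2 + F \<psi>) (\<lambda>j. XLpow F G j \<psi> p) m = 0"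
      using XH_coeff_vanish[OF nmu, of "\<lambda>j. XLpow F G j \<psi> p"] rec[OF \<open>\<psi> \<in> J\<close>] by blast
    then show "XH F (Ilam n \<mu> F G) r \<psi> pr p = 0"
      using XH_Ilam_zero_iff[OF J(1,3,4) \<open>\<psi> \<in> J\<close> \<open>r > 0\<close>] by blast
  qed
qed

section \<open>Elementary facts on trigonometric functions\<close>

(* Solutions of G'' = -w^2 G on a convex set; the two combinations a and b
   below have zero derivative. *)
lemma harmonic_oscillator_solution:
  fixes w :: real and G G' :: "real \<Rightarrow> real"
  assumes J: "convex J" and w: "w \<noteq> 0"
    and dG: "\<forall>x\<in>J. DERIV G x :> G' x" and dG': "\<forall>x\<in>J. DERIV G' x :> - w\<^sup>2 * G x"
  shows "\<exists>a b. \<forall>x\<in>J. G x = a * cos (w * x) + b * sin (w * x)"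
proof -
  define a where "a x = G x * cos (w * x) - G' x / w * sin (w * x)" for x
  define b where "b x = G x * sin (w * x) + G' x / w * cos (w * x)" for x
  have "DERIV a x :> 0" "DERIV b x :> 0" if "x \<in> J" for x
    using dG dG' that w unfolding a_def b_def
    by (auto intro!: derivative_eq_intros simp: field_simps power2_eq_square)
  then obtain a0 b0 where "\<forall>x\<in>J. a x = a0" "\<forall>x\<in>J. b x = b0"
    using has_field_derivative_zero_constant[OF J] has_field_derivative_at_within by metis
  moreover have "G x = a x * cos (w * x) + b x * sin (w * x)" for x
  proof -
    have "a x * cos (w * x) + b x * sin (w * x) = G x * ((sin (w * x))\<^sup>2 + (cos (w * x))\<^sup>2)"
      unfolding a_def b_def power2_eq_square by algebra
    then show ?thesis by simp
  qed
  ultimately show ?thesis by auto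
qed

(* Amplitude-phase form of a cos x + b sin x, via the polar form of a - i b. *)
lemma amplitude_phase:
  fixes a b :: real
  obtains A t where "\<And>x. a * cos x + b * sin x = A * cos (x + t)" "A = 0 \<longleftrightarrow> a = 0 \<and> b = 0"
proof -
  define z where "z = Complex a (- b)"
  have "z = rcis (cmod z) (Arg z)"
    by (simp add: rcis_cmod_Arg)
  then have a: "a = cmod z * cos (Arg z)" and b: "b = - (cmod z * sin (Arg z))"
    unfolding z_def by (metis complex.sel Re_rcis, metis complex.sel Im_rcis minus_minus)
  have "a * cos x + b * sin x = cmod z * cos (x + Arg z)" for x
    unfolding a b cos_add by (simp add: algebra_simps)
  moreover have "cmod z = 0 \<longleftrightarrow> a = 0 \<and> b = 0"
    by (simp add: z_def complex_eq_iff)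
  ultimately show ?thesis using that by blast
qed

lemma sin_zeros_isolated:
  fixes w t \<psi> :: real
  assumes w: "w \<noteq> 0" and s0: "sin (w * \<psi> + t) = 0"
  shows "eventually (\<lambda>x. sin (w * x + t) \<noteq> 0) (at \<psi>)"
  unfolding eventually_at
proof (intro exI[of _ "pi / \<bar>w\<bar>"] conjI ballI impI)
  show "pi / \<bar>w\<bar> > 0" using w by simp
  fix x :: real assume "x \<in> UNIV" and x: "x \<noteq> \<psi> \<and> dist x \<psi> < pi / \<bar>w\<bar>"
  let ?u = "w * (x - \<psi>)"
  have "\<bar>?u\<bar> = \<bar>w\<bar> * dist x \<psi>"
    by (simp add: dist_real_def abs_mult)
  also have "\<dots> < \<bar>w\<bar> * (pi / \<bar>w\<bar>)"
    using x w by (intro mult_strict_left_mono) auto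
  finally have "\<bar>?u\<bar> < pi" using w by simp
  moreover have "?u \<noteq> 0" using x w by simp
  ultimately have "sin ?u \<noteq> 0"
    using sin_eq_0_pi[of ?u] by (auto simp: abs_less_iff)
  moreover have "cos (w * \<psi> + t) \<noteq> 0"
    using s0 sin_cos_squared_add[of "w * \<psi> + t"] by auto
  ultimately have "sin ((w * \<psi> + t) + ?u) \<noteq> 0"
    using s0 by (simp add: sin_add)
  then show "sin (w * x + t) \<noteq> 0"
    by (simp add: algebra_simps)
qed

lemma vanishes_at_zero_of_sin:
  fixes w t k :: real
  assumes J: "open J" "\<psi> \<in> J" and F: "isCont F \<psi>" and w: "w \<noteq> 0"
    and s0: "sin (w * \<psi> + t) = 0"
    and Fk: "\<forall>x\<in>J. sin (w * x + t) \<noteq> 0 \<longrightarrow> F x = k / (sin (w * x + t))\<^sup>2"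
  shows "F \<psi> = 0"
proof -
  have near: "eventually (\<lambda>x. x \<in> J \<and> sin (w * x + t) \<noteq> 0) (at \<psi>)"
    using eventually_at_in_open'[OF J] sin_zeros_isolated[OF w s0] by (rule eventually_conj)
  have "((\<lambda>x. F x * (sin (w * x + t))\<^sup>2) \<longlongrightarrow> F \<psi> * (sin (w * \<psi> + t))\<^sup>2) (at \<psi>)"
    using F by (intro tendsto_intros) (auto simp: isCont_def intro!: continuous_intros)
  moreover have "eventually (\<lambda>x. k = F x * (sin (w * x + t))\<^sup>2) (at \<psi>)"
    using near Fk by (auto elim!: eventually_mono)
  ultimately have "k = 0"
    using s0 tendsto_unique[OF at_neq_bot] Lim_transform_eventually[OF tendsto_const] by fastforce
  then have "eventually (\<lambda>x. F x = 0) (at \<psi>)"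
    using near Fk by (auto elim!: eventually_mono)
  then have "(F \<longlongrightarrow> 0) (at \<psi>)"
    by (rule tendsto_eventually)
  with F show ?thesis
    using tendsto_unique[OF at_neq_bot] by (auto simp: isCont_def)
qed

section \<open>Solving the ordinary differential equations\<close>

lemma cos_phase_derivs:
  assumes J: "open J" "x \<in> J" and G: "\<forall>x\<in>J. G x = A * cos (w * x + t)"
  shows "deriv G x = - (w * A * sin (w * x + t))"
    and "deriv (deriv G) x = - w\<^sup>2 * G x"
proof -
  have d1: "deriv G y = - (w * A * sin (w * y + t))" if "y \<in> J" for y
  proof -
    have "deriv G y = deriv (\<lambda>y. A * cos (w * y + t)) y"
      by (rule deriv_cong_ev[OF eventually_nhds_eq_on_open[OF J(1) that] refl]) (use G in auto)
    also have "\<dots> = - (w * A * sin (w * y + t))"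
      by (rule DERIV_imp_deriv) (auto intro!: derivative_eq_intros simp: algebra_simps)
    finally show ?thesis .
  qed
  then show "deriv G x = - (w * A * sin (w * x + t))"
    using J(2) .
  have "deriv (deriv G) x = deriv (\<lambda>y. - (w * A * sin (w * y + t))) x"
    by (rule deriv_cong_ev[OF eventually_nhds_eq_on_open[OF J] refl]) (use d1 in auto)
  also have "\<dots> = - (w * A * (cos (w * x + t) * w))"
    by (rule DERIV_imp_deriv) (auto intro!: derivative_eq_intros)
  finally show "deriv (deriv G) x = - w\<^sup>2 * G x"
    using G J(2) by (simp add: power2_eq_square algebra_simps)
qed

lemma DERIV_times_sin_sq:
  assumes "DERIV F x :> F'"
  shows "DERIV (\<lambda>x. F x * (sin (w * x + t))\<^sup>2) x
           :> sin (w * x + t) * (F' * sin (w * x + t) + 2 * w * F x * cos (w * x + t))"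
  using assms by (auto intro!: derivative_eq_intros simp: power2_eq_square algebra_simps)

(* For G = A cos and G' = -w A sin, the condition F' G' = 2 w^2 F G factors
   as -w A (F' sin + 2 w F cos) = 0, i.e. as (F sin^2)' = 0 away from zeros of sin. *)
lemma product_condition_factorisation:
  fixes A w F0 F1 s c :: real
  shows "F1 * (- (w * A * s)) - 2 * w\<^sup>2 * F0 * (A * c) = - (w * A) * (F1 * s + 2 * w * F0 * c)"
  by (simp add: algebra_simps power2_eq_square)

lemma trig_form_of_angular_odes:
  assumes w: "w \<noteq> 0" and J: "open J" "convex J" "smooth_on J F" "smooth_on J G"
    and nonconst: "\<exists>x\<in>J. \<exists>y\<in>J. G x \<noteq> G y" and odes: "angular_odes w J F G"
  shows "\<exists>k \<psi>\<^sub>0 A. A \<noteq> 0 \<and>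
           (\<forall>\<psi>\<in>J. (sin (w * \<psi> + \<psi>\<^sub>0) \<noteq> 0 \<longrightarrow> F \<psi> = k / (sin (w * \<psi> + \<psi>\<^sub>0))\<^sup>2) \<and>
                   G \<psi> = A * cos (w * \<psi> + \<psi>\<^sub>0))"
proof -
  have "\<forall>x\<in>J. DERIV (deriv G) x :> - w\<^sup>2 * G x"
    using smooth_on_DERIV[OF smooth_on_deriv[OF J(4)]] odes unfolding angular_odes_def by simp
  then obtain a b where ab: "\<forall>x\<in>J. G x = a * cos (w * x) + b * sin (w * x)"
    using harmonic_oscillator_solution[OF J(2) w] smooth_on_DERIV[OF J(4)] by blast
  obtain A t where At: "\<And>x. a * cos x + b * sin x = A * cos (x + t)" "A = 0 \<longleftrightarrow> a = 0 \<and> b = 0"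
    using amplitude_phase[of a b] by blast
  have G: "\<forall>x\<in>J. G x = A * cos (w * x + t)"
    using ab At(1) by simp
  have A0: "A \<noteq> 0"
    using G nonconst by force
  define h where "h x = F x * (sin (w * x + t))\<^sup>2" for x
  have "\<exists>k. \<forall>x\<in>J. h x = k"
  proof (rule has_field_derivative_zero_constant[OF J(2)])
    fix x assume x: "x \<in> J"
    have "deriv F x * deriv G x = 2 * w\<^sup>2 * F x * G x"
      using odes x unfolding angular_odes_def by blast
    then have "- (w * A) * (deriv F x * sin (w * x + t) + 2 * w * F x * cos (w * x + t)) = 0"
      using G x unfolding cos_phase_derivs(1)[OF J(1) x G] product_condition_factorisation[symmetric]
      by simp
    then have "deriv F x * sin (w * x + t) + 2 * w * F x * cos (w * x + t) = 0"
      using A0 w by simp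
    with DERIV_times_sin_sq[OF smooth_on_DERIV[OF J(3) x], of w t]
    show "(h has_field_derivative 0) (at x within J)"
      unfolding h_def by (simp add: has_field_derivative_at_within)
  qed
  then obtain k where "\<forall>x\<in>J. h x = k" by blast
  then have "\<forall>\<psi>\<in>J. sin (w * \<psi> + t) \<noteq> 0 \<longrightarrow> F \<psi> = k / (sin (w * \<psi> + t))\<^sup>2"
    unfolding h_def by (simp add: field_simps)
  with A0 G show ?thesis by blast
qed

(* Conversely, such F and G satisfy the ODEs; at zeros of the sine F vanishes. *)
lemma angular_odes_of_trig_form:
  assumes w: "w \<noteq> 0" and J: "open J" "smooth_on J F"
    and trig: "\<forall>\<psi>\<in>J. (sin (w * \<psi> + \<psi>\<^sub>0) \<noteq> 0 \<longrightarrow> F \<psi> = k / (sin (w * \<psi> + \<psi>\<^sub>0))\<^sup>2) \<and>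
                      G \<psi> = A * cos (w * \<psi> + \<psi>\<^sub>0)"
  shows "angular_odes w J F G"
  unfolding angular_odes_def
proof (intro ballI conjI)
  fix x assume x: "x \<in> J"
  let ?s = "sin (w * x + \<psi>\<^sub>0)" and ?c = "cos (w * x + \<psi>\<^sub>0)"
  have G: "\<forall>x\<in>J. G x = A * cos (w * x + \<psi>\<^sub>0)"
    and Fk: "\<forall>x\<in>J. sin (w * x + \<psi>\<^sub>0) \<noteq> 0 \<longrightarrow> F x = k / (sin (w * x + \<psi>\<^sub>0))\<^sup>2"
    using trig by auto
  show "deriv (deriv G) x = - w\<^sup>2 * G x"
    by (rule cos_phase_derivs(2)[OF J(1) x G])
  have dG: "deriv G x = - (w * A * ?s)"
    by (rule cos_phase_derivs(1)[OF J(1) x G])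
  show "deriv F x * deriv G x = 2 * w\<^sup>2 * F x * G x"
  proof (cases "?s = 0")
    case True
    have "F x = 0"
      by (rule vanishes_at_zero_of_sin[OF J(1) x DERIV_isCont[OF smooth_on_DERIV[OF J(2) x]] w True Fk])
    then show ?thesis using dG True by simp
  next
    case False
    have "open (J \<inter> {y. sin (w * y + \<psi>\<^sub>0) \<noteq> 0})"
      using J(1) by (intro open_Int open_Collect_neq) (auto intro!: continuous_intros)
    then have "eventually (\<lambda>y. k = F y * (sin (w * y + \<psi>\<^sub>0))\<^sup>2) (nhds x)"
      using x False Fk by (auto elim!: eventually_mono[OF eventually_nhds_in_open])
    from DERIV_cong_ev[OF refl this refl, THEN iffD1, OF DERIV_const]
    have "DERIV (\<lambda>y. F y * (sin (w * y + \<psi>\<^sub>0))\<^sup>2) x :> 0" .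
    with DERIV_times_sin_sq[OF smooth_on_DERIV[OF J(2) x], of w \<psi>\<^sub>0]
    have "?s * (deriv F x * ?s + 2 * w * F x * ?c) = 0"
      by (rule DERIV_unique)
    then have "deriv F x * ?s + 2 * w * F x * ?c = 0"
      using False by simp
    moreover have "deriv F x * deriv G x - 2 * w\<^sup>2 * F x * G x
        = - (w * A) * (deriv F x * ?s + 2 * w * F x * ?c)"
      unfolding dG G[rule_format, OF x] by (rule product_condition_factorisation)
    ultimately show ?thesis by simp
  qed
qed

lemma angular_odes_iff_trig_form:
  assumes w: "w \<noteq> 0" and J: "open J" "convex J" "smooth_on J F" "smooth_on J G"
    and nonconst: "\<exists>x\<in>J. \<exists>y\<in>J. G x \<noteq> G y"
  shows "angular_odes w J F G \<longleftrightarrow>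
         (\<exists>k \<psi>\<^sub>0 A. A \<noteq> 0 \<and>
            (\<forall>\<psi>\<in>J. (sin (w * \<psi> + \<psi>\<^sub>0) \<noteq> 0 \<longrightarrow> F \<psi> = k / (sin (w * \<psi> + \<psi>\<^sub>0))\<^sup>2) \<and>
                    G \<psi> = A * cos (w * \<psi> + \<psi>\<^sub>0)))"
  using trig_form_of_angular_odes[OF assms] angular_odes_of_trig_form[OF w J(1,3)] by blast

theorem theorem1:
  fixes n :: nat and \<mu> :: real and F G :: "real \<Rightarrow> real" and J :: "real set"
  assumes "n \<ge> 1"
    and "open J" and "is_interval J" and "J \<noteq> {}"
    and "smooth_on J F" and "smooth_on J G"
    and "\<exists>x\<in>J. \<exists>y\<in>J. G x \<noteq> G y"
  shows "const_of_motion J F (Ilam n \<mu> F G) \<longleftrightarrow>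
         (real n * \<mu> = 1 \<and>
          (\<exists>k \<psi>\<^sub>0 A. A \<noteq> 0 \<and>
             (\<forall>\<psi>\<in>J. (sin (real n * \<psi> + \<psi>\<^sub>0) \<noteq> 0 \<longrightarrow>
                        F \<psi> = k / (sin (real n * \<psi> + \<psi>\<^sub>0))\<^sup>2) \<and>
                     G \<psi> = A * cos (real n * \<psi> + \<psi>\<^sub>0))))"
proof -
  have convex: "convex J"
    using \<open>is_interval J\<close> by (rule is_interval_convex_1[THEN iffD1])
  have "real n \<noteq> 0"
    using \<open>n \<ge> 1\<close> by simp
  have "const_of_motion J F (Ilam n \<mu> F G) \<longleftrightarrow> real n * \<mu> = 1 \<and> angular_odes (real n) J F G"
    using const_of_motion_iff_angular_odes[OF \<open>n \<ge> 1\<close> \<open>open J\<close> convex assms(5-7)] .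
  also have "angular_odes (real n) J F G \<longleftrightarrow>
         (\<exists>k \<psi>\<^sub>0 A. A \<noteq> 0 \<and>
             (\<forall>\<psi>\<in>J. (sin (real n * \<psi> + \<psi>\<^sub>0) \<noteq> 0 \<longrightarrow>
                        F \<psi> = k / (sin (real n * \<psi> + \<psi>\<^sub>0))\<^sup>2) \<and>
                     G \<psi> = A * cos (real n * \<psi> + \<psi>\<^sub>0)))"
    using angular_odes_iff_trig_form[OF \<open>real n \<noteq> 0\<close> \<open>open J\<close> convex assms(5-7)] .
  finally show ?thesis .
qed

end
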